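(* Let $X=[0,1]$, let $\Gamma$ be the group of orientation-preserving self-homeomorphisms of $[0,1]$ acting by application, and let $I$ be the ideal generated by the countable closed subsets of $[0,1]$ (i.e. subsets of countable closed sets). Then $\Gamma\curvearrowright X, I$ is $\sigma$-complete.
   Context: For a group $\Gamma$ acting on $X$, an invariant ideal $I$ on $X$ and $a\subseteq X$, $\mathrm{pstab}(a)=\{\gamma\in\Gamma:\gamma\cdot x=x\ \forall x\in a\}$ and $\gamma\cdot b=\{\gamma\cdot x:x\in b\}$. The dynamical ideal is $\sigma$-complete if for every $a\in I$ and every sequence $\langle b_n:n\in\omega\rangle$ of sets in $I$ there are $\gamma_n\in\mathrm{pstab}(a)$ with $\bigcup_n\gamma_n\cdot b_n\in I$. *)

theory Defs
  imports "HOL-Analysis.Analysis"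
begin

definition pstab :: "'g set \<Rightarrow> ('g \<Rightarrow> 'x \<Rightarrow> 'x) \<Rightarrow> 'x set \<Rightarrow> 'g set" where
  "pstab G act a = {g \<in> G. \<forall>x\<in>a. act g x = x}"

definition sigma_complete :: "'g set \<Rightarrow> ('g \<Rightarrow> 'x \<Rightarrow> 'x) \<Rightarrow> ('x set \<Rightarrow> bool) \<Rightarrow> bool" where
  "sigma_complete G act I \<longleftrightarrow>
     (\<forall>a b. I a \<longrightarrow> (\<forall>n::nat. I (b n)) \<longrightarrow>
        (\<exists>g. (\<forall>n. g n \<in> pstab G act a) \<and> I (\<Union>n. act (g n) ` b n)))"

text \<open>Orientation-preserving self-homeomorphisms of [0,1], as functions real to real
  (values outside [0,1] are irrelevant).\<close>

definition OPHomeo01 :: "(real \<Rightarrow> real) set" where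
  "OPHomeo01 = {f. (\<exists>g. homeomorphism {0..1} {0..1} f g) \<and> strict_mono_on {0..1} f}"

definition CCIdeal :: "real set \<Rightarrow> bool" where
  "CCIdeal a \<longleftrightarrow> a \<subseteq> {0..1} \<and> (\<exists>c. c \<subseteq> {0..1} \<and> countable c \<and> closed c \<and> a \<subseteq> c)"

end

theory Submission
  imports Defs
begin

text \<open>
  Enlarge \<open>a\<close> to a countable closed \<open>C \<subseteq> [0,1]\<close> containing 0 and 1, and each \<open>b n\<close> to a
  countable closed \<open>K n\<close>. A countable closed set misses an open subinterval \<open>(s,t)\<close> of every
  gap \<open>(p,q)\<close> of \<open>C\<close>; the piecewise linear map of \<open>[p,q]\<close> stretching \<open>(s,t)\<close> onto
  \<open>(p+e, q-e)\<close> pushes \<open>K n \<inter> (p,q)\<close> into the \<open>e\<close>-neighbourhoods of \<open>p\<close> and \<open>q\<close>.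
  Doing this in all gaps at once with \<open>e \<le> 1/(n+1)\<close> gives an orientation-preserving
  homeomorphism \<open>g n\<close> fixing \<open>C\<close> that moves \<open>K n\<close> within \<open>1/(n+1)\<close> of \<open>C\<close>. Then
  \<open>C \<union> (\<Union>n. g n ` K n)\<close> is countable and closed, as its points outside \<open>C\<close> can only
  accumulate at \<open>C\<close>.
\<close>

definition lin_interp :: "real \<Rightarrow> real \<Rightarrow> real \<Rightarrow> real \<Rightarrow> real \<Rightarrow> real" where
  "lin_interp a b c d x = c + (x - a) * (d - c) / (b - a)"

lemma lin_interp_ends:
  assumes "a \<noteq> b"
  shows "lin_interp a b c d a = c" "lin_interp a b c d b = d"
  using assms by (simp_all add: lin_interp_def)

lemma lin_interp_strict_mono:
  assumes "a < b" "c < d"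
  shows "strict_mono (lin_interp a b c d)"
  using assms
  by (intro strict_monoI) (simp add: lin_interp_def divide_strict_right_mono mult_strict_right_mono)

lemma lin_interp_inverse:
  assumes "a \<noteq> b" "c \<noteq> d"
  shows "lin_interp c d a b (lin_interp a b c d x) = x"
proof -
  have "b - a \<noteq> 0" "d - c \<noteq> 0" using assms by auto
  then show ?thesis by (simp add: lin_interp_def)
qed

lemma strict_mono_on_glue:
  fixes f :: "'a::linorder \<Rightarrow> 'b::order"
  assumes "s \<in> S" and lo: "strict_mono_on (S \<inter> {..s}) f" and hi: "strict_mono_on (S \<inter> {s..}) f"
  shows "strict_mono_on S f"
proof (rule strict_mono_onI)
  fix x y assume xy: "x \<in> S" "y \<in> S" "x < y"
  consider "y \<le> s" | "s \<le> x" | "x < s" "s < y" by fastforce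
  then show "f x < f y"
  proof cases
    case 3
    then have "f x < f s" "f s < f y"
      using xy \<open>s \<in> S\<close> lo hi by (auto intro: strict_mono_onD)
    then show ?thesis by order
  qed (use xy lo hi in \<open>auto intro: strict_mono_onD\<close>)
qed

definition piecewise_linear :: "real \<Rightarrow> real \<Rightarrow> real \<Rightarrow> real \<Rightarrow> real \<Rightarrow> real \<Rightarrow> real \<Rightarrow> real" where
  "piecewise_linear p q s t s' t' x =
     (if x \<le> s then lin_interp p s p s' x
      else if x \<le> t then lin_interp s t s' t' x
      else lin_interp t q t' q x)"

context
  fixes p q s t s' t' :: real
  assumes knots: "p < s" "s < t" "t < q" "p < s'" "s' < t'" "t' < q"
begin

lemma piecewise_linear_at_knots:
  "piecewise_linear p q s t s' t' p = p" "piecewise_linear p q s t s' t' s = s'"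
  "piecewise_linear p q s t s' t' t = t'" "piecewise_linear p q s t s' t' q = q"
  using knots by (simp_all add: piecewise_linear_def lin_interp_ends)

lemma piecewise_linear_strict_mono: "strict_mono (piecewise_linear p q s t s' t')"
proof -
  have piece: "strict_mono_on A (piecewise_linear p q s t s' t')"
    if mono: "strict_mono (lin_interp a b c d)"
      and eq: "\<And>x. x \<in> A \<Longrightarrow> piecewise_linear p q s t s' t' x = lin_interp a b c d x"
    for A a b c d
  proof (rule strict_mono_onI)
    fix x y assume "x \<in> A" "y \<in> A" "x < y"
    show "piecewise_linear p q s t s' t' x < piecewise_linear p q s t s' t' y"
      unfolding eq[OF \<open>x \<in> A\<close>] eq[OF \<open>y \<in> A\<close>] by (rule strict_monoD[OF mono \<open>x < y\<close>])
  qed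
  have lo: "strict_mono_on {..s} (piecewise_linear p q s t s' t')"
    by (rule piece[OF lin_interp_strict_mono[of p s p s']])
      (use knots in \<open>auto simp: piecewise_linear_def\<close>)
  have mid: "strict_mono_on ({s..} \<inter> {..t}) (piecewise_linear p q s t s' t')"
    by (rule piece[OF lin_interp_strict_mono[of s t s' t']])
      (use knots in \<open>auto simp: piecewise_linear_def lin_interp_ends\<close>)
  have hi: "strict_mono_on ({s..} \<inter> {t..}) (piecewise_linear p q s t s' t')"
    by (rule piece[OF lin_interp_strict_mono[of t q t' q]])
      (use knots in \<open>auto simp: piecewise_linear_def lin_interp_ends\<close>)
  have "strict_mono_on {s..} (piecewise_linear p q s t s' t')"
    by (rule strict_mono_on_glue[OF _ mid hi]) (use knots in simp)
  then show ?thesis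
    using strict_mono_on_glue[of s UNIV "piecewise_linear p q s t s' t'"] lo by simp
qed

lemma piecewise_linear_le_iff:
  "piecewise_linear p q s t s' t' x \<le> piecewise_linear p q s t s' t' y \<longleftrightarrow> x \<le> y"
  by (rule strict_mono_less_eq[OF piecewise_linear_strict_mono])

lemma piecewise_linear_maps_interval:
  assumes "x \<in> {p<..<q}"
  shows "piecewise_linear p q s t s' t' x \<in> {p<..<q}"
proof -
  have "piecewise_linear p q s t s' t' p < piecewise_linear p q s t s' t' x"
    "piecewise_linear p q s t s' t' x < piecewise_linear p q s t s' t' q"
    using assms strict_monoD[OF piecewise_linear_strict_mono] by simp_all
  then show ?thesis unfolding piecewise_linear_at_knots by simp
qed

lemma piecewise_linear_inverse:
  "piecewise_linear p q s' t' s t (piecewise_linear p q s t s' t' x) = x"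
proof -
  define y where "y = piecewise_linear p q s t s' t' x"
  have "y \<le> s' \<longleftrightarrow> x \<le> s" "y \<le> t' \<longleftrightarrow> x \<le> t"
    unfolding y_def using piecewise_linear_le_iff piecewise_linear_at_knots by metis+
  moreover have "y = (if x \<le> s then lin_interp p s p s' x
      else if x \<le> t then lin_interp s t s' t' x else lin_interp t q t' q x)"
    unfolding y_def piecewise_linear_def ..
  ultimately show ?thesis
    using knots unfolding y_def[symmetric] by (auto simp: piecewise_linear_def lin_interp_inverse)
qed

end

definition extend_by_translations ::
    "real \<Rightarrow> real \<Rightarrow> real \<Rightarrow> real \<Rightarrow> (real \<Rightarrow> real) \<Rightarrow> real \<Rightarrow> real" where
  "extend_by_translations a b c d f x =
     (if x < a then x - a + c else if b < x then x - b + d else f x)"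

lemma extend_by_translations_mono:
  assumes "a \<le> b" and mono: "mono_on {a..b} f" and into: "f ` {a..b} \<subseteq> {c..d}"
  shows "mono (extend_by_translations a b c d f)" (is "mono ?F")
proof (rule monoI)
  fix x y :: real assume "x \<le> y"
  have F_lo: "?F z < c" if "z < a" for z using that by (simp add: extend_by_translations_def)
  have F_hi: "d < ?F z" if "b < z" for z
    using that \<open>a \<le> b\<close> by (simp add: extend_by_translations_def)
  have F_mid: "?F z = f z" "?F z \<in> {c..d}" if "z \<in> {a..b}" for z
  proof -
    show "?F z = f z" using that by (simp add: extend_by_translations_def)
    show "?F z \<in> {c..d}" unfolding \<open>?F z = f z\<close> by (rule subsetD[OF into imageI[OF that]])
  qed
  have "c \<le> d" using F_mid(2)[of a] \<open>a \<le> b\<close> by simp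
  have "y < a \<or> b < x \<or> (x < a \<and> a \<le> y) \<or> (x \<le> b \<and> b < y) \<or> (x \<in> {a..b} \<and> y \<in> {a..b})"
    using \<open>x \<le> y\<close> by auto
  then consider "y < a" | "b < x" | "x < a" "a \<le> y" | "x \<le> b" "b < y" | "x \<in> {a..b}" "y \<in> {a..b}"
    by blast
  then show "?F x \<le> ?F y"
  proof cases
    case 1
    then have "x < a" using \<open>x \<le> y\<close> by linarith
    then show ?thesis using 1 \<open>x \<le> y\<close> by (simp add: extend_by_translations_def)
  next
    case 2
    then have "b < y" "\<not> x < a" "\<not> y < a" using \<open>x \<le> y\<close> \<open>a \<le> b\<close> by linarith+
    then show ?thesis using 2 \<open>x \<le> y\<close> by (simp add: extend_by_translations_def)
  next
    case 3
    have "c \<le> ?F y"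
    proof (cases "y \<le> b")
      case True then show ?thesis using F_mid(2)[of y] 3 by simp
    next
      case False then show ?thesis using F_hi[of y] \<open>c \<le> d\<close> by simp
    qed
    then show ?thesis using F_lo[of x] 3 by simp
  next
    case 4
    have "?F x \<le> d"
    proof (cases "a \<le> x")
      case True then show ?thesis using F_mid(2)[of x] 4 by simp
    next
      case False then show ?thesis using F_lo[of x] \<open>c \<le> d\<close> by simp
    qed
    then show ?thesis using F_hi[of y] 4 by simp
  next
    case 5
    then show ?thesis using mono_onD[OF mono 5 \<open>x \<le> y\<close>] by (simp add: F_mid)
  qed
qed

lemma extend_by_translations_surj:
  assumes "a \<le> b" and onto: "{c..d} \<subseteq> f ` {a..b}"
  shows "surj (extend_by_translations a b c d f)" (is "surj ?F")
proof -
  have "y \<in> range ?F" for y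
  proof -
    have "y < c \<or> d < y \<or> y \<in> {c..d}" by auto
    then have "y < c \<or> d < y \<or> y \<in> f ` {a..b}" using onto by blast
    then consider "y < c" | "d < y" | x where "x \<in> {a..b}" "y = f x" by blast
    then show ?thesis
    proof cases
      case 1
      then have "?F (y - c + a) = y" by (simp add: extend_by_translations_def)
      then show ?thesis by (metis rangeI)
    next
      case 2
      then have "?F (y - d + b) = y" using \<open>a \<le> b\<close> by (simp add: extend_by_translations_def)
      then show ?thesis by (metis rangeI)
    next
      case 3
      then have "?F x = y" by (simp add: extend_by_translations_def)
      then show ?thesis by (metis rangeI)
    qed
  qed
  then show ?thesis by blast
qed

lemma mono_on_onto_interval_imp_continuous_on:
  fixes f :: "real \<Rightarrow> real"
  assumes mono: "mono_on {a..b} f" and onto: "f ` {a..b} = {c..d}"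
  shows "continuous_on {a..b} f"
proof (cases "a \<le> b")
  case True
  \<comment> \<open>\<open>continuous_onI_mono\<close> needs an open image, hence the extension to the whole line\<close>
  let ?F = "extend_by_translations a b c d f"
  have "mono ?F" using True mono onto by (intro extend_by_translations_mono) auto
  moreover have "surj ?F" using True onto by (intro extend_by_translations_surj) auto
  ultimately have "continuous_on UNIV ?F"
    by (intro continuous_onI_mono) (simp_all add: monoD)
  then have "continuous_on {a..b} ?F" by (rule continuous_on_subset) simp
  then show ?thesis by (rule continuous_on_eq) (simp add: extend_by_translations_def)
qed simp

lemma strict_mono_onto_in_OPHomeo01:
  assumes mono: "strict_mono_on {0..1} f" and onto: "f ` {0..1} = {0..1}"
  shows "f \<in> OPHomeo01"
proof -
  have "continuous_on {0..1} f"
    using strict_mono_on_imp_mono_on[OF mono] onto by (rule mono_on_onto_interval_imp_continuous_on)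
  then obtain g where "homeomorphism {0..1} {0..1} f g"
    using homeomorphism_compact[OF compact_Icc _ onto strict_mono_on_imp_inj_on[OF mono]] by blast
  with mono show ?thesis unfolding OPHomeo01_def by blast
qed

lemma OPHomeo01_image_closed_subset:
  assumes "f \<in> OPHomeo01" "closed K" "K \<subseteq> {0..1}"
  shows "closed (f ` K)" "f ` K \<subseteq> {0..1}"
proof -
  obtain g where hom: "homeomorphism {0..1} {0..1} f g"
    using assms(1) unfolding OPHomeo01_def by blast
  have "compact K"
    using closed_Int_compact[OF assms(2) compact_Icc[of 0 1]] assms(3) by (simp add: Int_absorb2)
  moreover have "continuous_on K f"
    using homeomorphism_cont1[OF hom] assms(3) by (rule continuous_on_subset)
  ultimately show "closed (f ` K)" by (intro compact_imp_closed compact_continuous_image)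
  show "f ` K \<subseteq> {0..1}" using homeomorphism_image1[OF hom] assms(3) by blast
qed

definition gap_lo :: "real set \<Rightarrow> real \<Rightarrow> real" where
  "gap_lo C x = Sup (C \<inter> {..x})"

definition gap_hi :: "real set \<Rightarrow> real \<Rightarrow> real" where
  "gap_hi C x = Inf (C \<inter> {x..})"

lemma le_gap_lo: "c \<in> C \<Longrightarrow> c \<le> x \<Longrightarrow> c \<le> gap_lo C x"
  unfolding gap_lo_def by (rule cSup_upper) (auto intro: bdd_aboveI2)

lemma gap_hi_le: "c \<in> C \<Longrightarrow> x \<le> c \<Longrightarrow> gap_hi C x \<le> c"
  unfolding gap_hi_def by (rule cInf_lower) (auto intro: bdd_belowI2)

lemma gap_bounds:
  assumes C: "closed C" "0 \<in> C" "1 \<in> C" and x: "x \<in> {0..1}" "x \<notin> C"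
  shows "gap_lo C x \<in> C" "gap_lo C x < x" "gap_hi C x \<in> C" "x < gap_hi C x"
    and "{gap_lo C x<..<gap_hi C x} \<inter> C = {}"
proof -
  have ne: "C \<inter> {..x} \<noteq> {}" "C \<inter> {x..} \<noteq> {}" using C x by auto
  show lo: "gap_lo C x \<in> C" unfolding gap_lo_def
    using closed_subset_contains_Sup[OF C(1) _ ne(1)] by (auto intro: bdd_aboveI2)
  have "gap_lo C x \<le> x" unfolding gap_lo_def using ne(1) by (auto intro: cSup_least)
  then show "gap_lo C x < x" using lo x(2) by (auto simp: order_le_less)
  show hi: "gap_hi C x \<in> C" unfolding gap_hi_def
    using closed_subset_contains_Inf[OF C(1) _ ne(2)] by (auto intro: bdd_belowI2)
  have "x \<le> gap_hi C x" unfolding gap_hi_def using ne(2) by (auto intro: cInf_greatest)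
  then show "x < gap_hi C x" using hi x(2) by (auto simp: order_le_less)
  have False if "c \<in> C" "gap_lo C x < c" "c < gap_hi C x" for c
    using that le_gap_lo[of c C x] gap_hi_le[of c C x] by linarith
  then show "{gap_lo C x<..<gap_hi C x} \<inter> C = {}" by auto
qed

lemma gap_eq:
  assumes "p \<in> C" "q \<in> C" "z \<in> {p<..<q}" "{p<..<q} \<inter> C = {}"
  shows "gap_lo C z = p" "gap_hi C z = q"
proof -
  have outside: "c \<notin> {p<..<q}" if "c \<in> C" for c using that assms(4) by blast
  have "c \<le> p" if "c \<in> C" "c \<le> z" for c
    using outside[OF that(1)] that(2) assms(3) by auto
  then show "gap_lo C z = p" unfolding gap_lo_def using assms by (intro cSup_eq_maximum) auto
  have "q \<le> c" if "c \<in> C" "z \<le> c" for c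
    using outside[OF that(1)] that(2) assms(3) by auto
  then show "gap_hi C z = q" unfolding gap_hi_def using assms by (intro cInf_eq_minimum) auto
qed

lemma countable_closed_misses_subinterval:
  fixes K :: "real set"
  assumes "countable K" "closed K" "p < q"
  shows "\<exists>s t. p < s \<and> s < t \<and> t < q \<and> {s<..<t} \<inter> K = {}"
proof -
  have "\<not> {p<..<q} \<subseteq> K"
    using assms uncountable_open_interval countable_subset by blast
  then obtain z where z: "z \<in> {p<..<q}" "z \<notin> K" by blast
  obtain e where e: "e > 0" "ball z e \<subseteq> - K"
    using open_contains_ball assms(2) z(2) by (metis ComplI open_Compl)
  define d where "d = min e (min (z - p) (q - z)) / 2"
  have "d \<le> e / 2" "d \<le> (z - p) / 2" "d \<le> (q - z) / 2" "0 < d"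
    using e z unfolding d_def by auto
  then have d: "0 < d" "d < e" "p < z - d" "z + d < q" using e z by auto
  have "{z - d<..<z + d} \<subseteq> ball z e" using d by (auto simp: dist_real_def)
  then have "{z - d<..<z + d} \<inter> K = {}" using e by blast
  with d show ?thesis by (intro exI[of _ "z - d"] exI[of _ "z + d"]) auto
qed

definition free_interval :: "real set \<Rightarrow> real \<Rightarrow> real \<Rightarrow> real \<times> real" where
  "free_interval K p q = (SOME (s, t). p < s \<and> s < t \<and> t < q \<and> {s<..<t} \<inter> K = {})"

definition gap_stretch :: "real set \<Rightarrow> real \<Rightarrow> real \<Rightarrow> real \<Rightarrow> real \<Rightarrow> real" where
  "gap_stretch K \<epsilon> p q = (case free_interval K p q of (s, t) \<Rightarrow>
     let e = min ((q - p) / 3) \<epsilon> in piecewise_linear p q s t (p + e) (q - e))"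

context
  fixes K :: "real set" and \<epsilon> p q :: real
  assumes K: "countable K" "closed K" and \<epsilon>: "0 < \<epsilon>" and pq: "p < q"
begin

lemma gap_stretch_as_piecewise_linear:
  obtains s t e where "p < s" "s < t" "t < q" "p < p + e" "p + e < q - e" "q - e < q"
    "{s<..<t} \<inter> K = {}" "e \<le> \<epsilon>" "gap_stretch K \<epsilon> p q = piecewise_linear p q s t (p + e) (q - e)"
proof -
  have "(\<lambda>(s, t). p < s \<and> s < t \<and> t < q \<and> {s<..<t} \<inter> K = {}) (free_interval K p q)"
    unfolding free_interval_def
    by (rule someI_ex) (use countable_closed_misses_subinterval[OF K pq] in auto)
  then obtain s t where "free_interval K p q = (s, t)"
    "p < s" "s < t" "t < q" "{s<..<t} \<inter> K = {}"
    by (cases "free_interval K p q") auto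
  moreover define e where "e = min ((q - p) / 3) \<epsilon>"
  moreover have "0 < e" using \<epsilon> pq unfolding e_def by simp
  moreover have "e \<le> (q - p) / 3" "e \<le> \<epsilon>"
    unfolding e_def by (rule min.cobounded1, rule min.cobounded2)
  ultimately show ?thesis
    using that[of s t e] pq by (simp add: gap_stretch_def Let_def)
qed

lemma gap_stretch_strict_mono: "strict_mono (gap_stretch K \<epsilon> p q)"
proof (rule gap_stretch_as_piecewise_linear)
  fix s t e assume knots: "p < s" "s < t" "t < q" "p < p + e" "p + e < q - e" "q - e < q"
    and eq: "gap_stretch K \<epsilon> p q = piecewise_linear p q s t (p + e) (q - e)"
  show ?thesis unfolding eq by (rule piecewise_linear_strict_mono[OF knots])
qed

lemma gap_stretch_in_gap: "x \<in> {p<..<q} \<Longrightarrow> gap_stretch K \<epsilon> p q x \<in> {p<..<q}"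
proof (rule gap_stretch_as_piecewise_linear)
  fix s t e assume knots: "p < s" "s < t" "t < q" "p < p + e" "p + e < q - e" "q - e < q"
    and eq: "gap_stretch K \<epsilon> p q = piecewise_linear p q s t (p + e) (q - e)" and x: "x \<in> {p<..<q}"
  show ?thesis unfolding eq by (rule piecewise_linear_maps_interval[OF knots x])
qed

lemma gap_stretch_onto_gap:
  assumes "y \<in> {p<..<q}"
  shows "\<exists>x\<in>{p<..<q}. gap_stretch K \<epsilon> p q x = y"
proof (rule gap_stretch_as_piecewise_linear)
  fix s t e assume knots: "p < s" "s < t" "t < q" "p < p + e" "p + e < q - e" "q - e < q"
    and eq: "gap_stretch K \<epsilon> p q = piecewise_linear p q s t (p + e) (q - e)"
  define x where "x = piecewise_linear p q (p + e) (q - e) s t y"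
  have "x \<in> {p<..<q}"
    unfolding x_def by (rule piecewise_linear_maps_interval[OF knots(4,5,6,1,2,3) assms])
  moreover have "gap_stretch K \<epsilon> p q x = y"
    unfolding eq x_def by (rule piecewise_linear_inverse[OF knots(4,5,6,1,2,3)])
  ultimately show ?thesis by blast
qed

lemma gap_stretch_near_ends:
  assumes "x \<in> K" "x \<in> {p<..<q}"
  shows "gap_stretch K \<epsilon> p q x \<le> p + \<epsilon> \<or> q - \<epsilon> \<le> gap_stretch K \<epsilon> p q x"
proof (rule gap_stretch_as_piecewise_linear)
  fix s t e assume knots: "p < s" "s < t" "t < q" "p < p + e" "p + e < q - e" "q - e < q"
    and free: "{s<..<t} \<inter> K = {}" and "e \<le> \<epsilon>"
    and eq: "gap_stretch K \<epsilon> p q = piecewise_linear p q s t (p + e) (q - e)"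
  note pl = piecewise_linear_le_iff[OF knots] piecewise_linear_at_knots[OF knots]
  have "x \<notin> {s<..<t}" using free assms(1) by blast
  then have "x \<le> s \<or> t \<le> x" by auto
  then have "piecewise_linear p q s t (p + e) (q - e) x \<le> p + e
      \<or> q - e \<le> piecewise_linear p q s t (p + e) (q - e) x"
    unfolding pl(1)[symmetric, of x s] pl(1)[symmetric, of t x] pl(3,4) .
  with \<open>e \<le> \<epsilon>\<close> show ?thesis unfolding eq by linarith
qed

end

definition squeeze :: "real set \<Rightarrow> real set \<Rightarrow> real \<Rightarrow> real \<Rightarrow> real" where
  "squeeze C K \<epsilon> x = (if x \<in> C then x else gap_stretch K \<epsilon> (gap_lo C x) (gap_hi C x) x)"

context
  fixes C K :: "real set" and \<epsilon> :: real
  assumes C: "closed C" "C \<subseteq> {0..1}" "0 \<in> C" "1 \<in> C"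
    and K: "countable K" "closed K" and \<epsilon>: "0 < \<epsilon>"
begin

lemma squeeze_in_gap:
  assumes "x \<in> {0..1}" "x \<notin> C"
  shows "squeeze C K \<epsilon> x \<in> {gap_lo C x<..<gap_hi C x}"
proof -
  note gap = gap_bounds[OF C(1,3,4) assms]
  have "gap_lo C x < gap_hi C x" using gap(2,4) by linarith
  then show ?thesis
    using gap_stretch_in_gap[OF K \<epsilon> _, of "gap_lo C x" "gap_hi C x" x] gap(2,4) assms(2)
    by (simp add: squeeze_def)
qed

lemma squeeze_strict_mono: "strict_mono_on {0..1} (squeeze C K \<epsilon>)"
proof (rule strict_mono_onI)
  fix x y :: real assume x: "x \<in> {0..1}" and y: "y \<in> {0..1}" and "x < y"
  show "squeeze C K \<epsilon> x < squeeze C K \<epsilon> y"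
  proof (cases "x \<in> C"; cases "y \<in> C")
    assume "x \<in> C" "y \<in> C"
    with \<open>x < y\<close> show ?thesis by (simp add: squeeze_def)
  next
    assume "x \<in> C" "y \<notin> C"
    then have "x \<le> gap_lo C y" using \<open>x < y\<close> by (simp add: le_gap_lo)
    with squeeze_in_gap[OF y \<open>y \<notin> C\<close>] \<open>x \<in> C\<close> show ?thesis by (simp add: squeeze_def)
  next
    assume "x \<notin> C" "y \<in> C"
    then have "gap_hi C x \<le> y" using \<open>x < y\<close> by (simp add: gap_hi_le)
    with squeeze_in_gap[OF x \<open>x \<notin> C\<close>] \<open>y \<in> C\<close> show ?thesis by (simp add: squeeze_def)
  next
    assume "x \<notin> C" "y \<notin> C"
    note gap = gap_bounds[OF C(1,3,4) x \<open>x \<notin> C\<close>]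
    show ?thesis
    proof (cases "y < gap_hi C x")
      case True
      then have "gap_lo C y = gap_lo C x" "gap_hi C y = gap_hi C x"
        using gap_eq[OF gap(1,3) _ gap(5), of y] gap(2) \<open>x < y\<close> by auto
      moreover have "gap_lo C x < gap_hi C x" using gap(2,4) by linarith
      ultimately show ?thesis
        using strict_monoD[OF gap_stretch_strict_mono[OF K \<epsilon>] \<open>x < y\<close>] \<open>x \<notin> C\<close> \<open>y \<notin> C\<close>
        by (simp add: squeeze_def)
    next
      case False
      then have "gap_hi C x \<le> gap_lo C y" using gap(3) by (simp add: le_gap_lo)
      then show ?thesis
        using squeeze_in_gap[OF x \<open>x \<notin> C\<close>] squeeze_in_gap[OF y \<open>y \<notin> C\<close>] by simp
    qed
  qed
qed

lemma squeeze_onto: "squeeze C K \<epsilon> ` {0..1} = {0..1}"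
proof (intro equalityI subsetI)
  fix y assume "y \<in> squeeze C K \<epsilon> ` {0..1}"
  then obtain x where x: "x \<in> {0..1}" "y = squeeze C K \<epsilon> x" by blast
  show "y \<in> {0..1}"
  proof (cases "x \<in> C")
    case False
    have "gap_lo C x \<in> {0..1}" "gap_hi C x \<in> {0..1}"
      using gap_bounds[OF C(1,3,4) x(1) False] C(2) by auto
    then show ?thesis using squeeze_in_gap[OF x(1) False] x(2) by auto
  qed (use x in \<open>simp add: squeeze_def\<close>)
next
  fix y :: real assume y: "y \<in> {0..1}"
  show "y \<in> squeeze C K \<epsilon> ` {0..1}"
  proof (cases "y \<in> C")
    case True
    then have "squeeze C K \<epsilon> y = y" by (simp add: squeeze_def)
    then show ?thesis using y by (metis image_eqI)
  next
    case False
    note gap = gap_bounds[OF C(1,3,4) y False]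
    have "gap_lo C y < gap_hi C y" "y \<in> {gap_lo C y<..<gap_hi C y}" using gap(2,4) by auto
    then obtain x where x: "x \<in> {gap_lo C y<..<gap_hi C y}"
        "gap_stretch K \<epsilon> (gap_lo C y) (gap_hi C y) x = y"
      using gap_stretch_onto_gap[OF K \<epsilon>] by blast
    have "gap_lo C x = gap_lo C y" "gap_hi C x = gap_hi C y" "x \<notin> C"
      using gap_eq[OF gap(1,3) x(1) gap(5)] x(1) gap(5) by auto
    then have "squeeze C K \<epsilon> x = y" using x(2) by (simp add: squeeze_def)
    moreover have "gap_lo C y \<in> {0..1}" "gap_hi C y \<in> {0..1}" using gap(1,3) C(2) by auto
    then have "x \<in> {0..1}" using x(1) by auto
    ultimately show ?thesis by (metis image_eqI)
  qed
qed

lemma squeeze_near: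
  assumes "y \<in> K" "y \<in> {0..1}"
  shows "infdist (squeeze C K \<epsilon> y) C \<le> \<epsilon>"
proof (cases "y \<in> C")
  case False
  note gap = gap_bounds[OF C(1,3,4) assms(2) False]
  have "squeeze C K \<epsilon> y \<le> gap_lo C y + \<epsilon> \<or> gap_hi C y - \<epsilon> \<le> squeeze C K \<epsilon> y"
    using gap_stretch_near_ends[OF K \<epsilon> _ assms(1)] gap(2,4) False by (simp add: squeeze_def)
  moreover have "squeeze C K \<epsilon> y \<in> {gap_lo C y<..<gap_hi C y}"
    by (rule squeeze_in_gap[OF assms(2) False])
  ultimately have "dist (squeeze C K \<epsilon> y) (gap_lo C y) \<le> \<epsilon>
      \<or> dist (squeeze C K \<epsilon> y) (gap_hi C y) \<le> \<epsilon>"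
    by (auto simp: dist_real_def)
  then show ?thesis using gap(1,3) infdist_le2 by blast
qed (simp add: squeeze_def \<epsilon> less_imp_le)

end

lemma CCIdeal_subset: "CCIdeal A \<Longrightarrow> B \<subseteq> A \<Longrightarrow> CCIdeal B"
  unfolding CCIdeal_def by blast

lemma OPHomeo01_squeezing:
  fixes C K :: "real set" and \<epsilon> :: real
  assumes "closed C" "C \<subseteq> {0..1}" "0 \<in> C" "1 \<in> C" "countable K" "closed K" "0 < \<epsilon>"
  shows "\<exists>f\<in>OPHomeo01. (\<forall>x\<in>C. f x = x) \<and> (\<forall>y\<in>K \<inter> {0..1}. infdist (f y) C \<le> \<epsilon>)"
proof (intro bexI conjI ballI)
  show "squeeze C K \<epsilon> \<in> OPHomeo01"
    using squeeze_strict_mono[OF assms] squeeze_onto[OF assms]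
    by (rule strict_mono_onto_in_OPHomeo01)
  show "squeeze C K \<epsilon> x = x" if "x \<in> C" for x using that by (simp add: squeeze_def)
  show "infdist (squeeze C K \<epsilon> y) C \<le> \<epsilon>" if "y \<in> K \<inter> {0..1}" for y
    using that squeeze_near[OF assms] by blast
qed

lemma closed_Un_UN_approaching:
  fixes C :: "'a::metric_space set" and E :: "nat \<Rightarrow> 'a set"
  assumes C: "closed C" "C \<noteq> {}" and E: "\<And>n. closed (E n)" and "\<delta> \<longlonglongrightarrow> 0"
    and near: "\<And>n y. y \<in> E n \<Longrightarrow> infdist y C \<le> \<delta> n"
  shows "closed (C \<union> (\<Union>n. E n))"
  unfolding closed_def open_dist
proof (intro ballI)
  fix x assume "x \<in> - (C \<union> (\<Union>n. E n))"
  then have x: "x \<notin> C" "\<And>n. x \<notin> E n" by auto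
  define r where "r = infdist x C"
  have "r \<noteq> 0" using x(1) in_closed_iff_infdist_zero[OF C] unfolding r_def by blast
  then have "0 < r" using infdist_nonneg[of x C] unfolding r_def by linarith
  then obtain N where N: "\<And>n. N \<le> n \<Longrightarrow> \<delta> n < r / 2"
    using order_tendstoD(2)[OF \<open>\<delta> \<longlonglongrightarrow> 0\<close>, of "r / 2"] by (auto simp: eventually_sequentially)
  define F where "F = C \<union> (\<Union>n<N. E n)"
  have "closed F" unfolding F_def using C E by (intro closed_Un closed_UN) auto
  then have "open (- F)" by (rule open_Compl)
  moreover have "x \<in> - F" unfolding F_def using x by auto
  ultimately obtain e where e: "0 < e" "\<And>y. dist y x < e \<Longrightarrow> y \<in> - F"
    unfolding open_dist by blast
  show "\<exists>e>0. \<forall>y. dist y x < e \<longrightarrow> y \<in> - (C \<union> (\<Union>n. E n))"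
  proof (intro exI[of _ "min e (r / 2)"] conjI allI impI)
    show "0 < min e (r / 2)" using e \<open>0 < r\<close> by simp
    fix y assume y: "dist y x < min e (r / 2)"
    have "y \<notin> E n" if "N \<le> n" for n
    proof
      assume "y \<in> E n"
      have "r \<le> infdist y C + dist x y" unfolding r_def by (rule infdist_triangle)
      then have "r / 2 < infdist y C" using y by (simp add: dist_commute)
      with near[OF \<open>y \<in> E n\<close>] N[OF that] show False by linarith
    qed
    moreover have "y \<notin> E n" if "n < N" for n using e(2)[of y] y that unfolding F_def by auto
    ultimately have "y \<notin> E n" for n by (cases "N \<le> n") auto
    moreover have "y \<notin> C" using e(2)[of y] y unfolding F_def by auto
    ultimately show "y \<in> - (C \<union> (\<Union>n. E n))" by blast
  qed
qed

lemma CCIdeal_squeezed_union: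
  fixes C :: "real set" and K :: "nat \<Rightarrow> real set"
  assumes C: "closed C" "C \<subseteq> {0..1}" "0 \<in> C" "1 \<in> C" "countable C"
    and K: "\<And>n. K n \<subseteq> {0..1}" "\<And>n. countable (K n)" "\<And>n. closed (K n)"
  shows "\<exists>f. (\<forall>n. f n \<in> OPHomeo01 \<and> (\<forall>x\<in>C. f n x = x)) \<and> CCIdeal (\<Union>n. f n ` K n)"
proof -
  have "\<forall>n. \<exists>g\<in>OPHomeo01. (\<forall>x\<in>C. g x = x) \<and> (\<forall>y\<in>K n. infdist (g y) C \<le> inverse (real (Suc n)))"
    using OPHomeo01_squeezing[OF C(1-4) K(2,3)] K(1) by (simp add: Int_absorb2)
  then obtain f where f: "\<And>n. f n \<in> OPHomeo01" "\<And>n x. x \<in> C \<Longrightarrow> f n x = x"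
    "\<And>n y. y \<in> K n \<Longrightarrow> infdist (f n y) C \<le> inverse (real (Suc n))"
    by metis
  define D where "D = C \<union> (\<Union>n. f n ` K n)"
  have "closed D" unfolding D_def
  proof (rule closed_Un_UN_approaching[OF C(1) _ _ LIMSEQ_inverse_real_of_nat])
    show "C \<noteq> {}" using C(3) by blast
  qed (use OPHomeo01_image_closed_subset(1)[OF f(1) K(3,1)] f(3) in auto)
  moreover have "countable D" unfolding D_def using C(5) K(2) by auto
  moreover have "D \<subseteq> {0..1}"
    unfolding D_def using C(2) OPHomeo01_image_closed_subset(2)[OF f(1) K(3,1)] by blast
  ultimately have "CCIdeal (\<Union>n. f n ` K n)" unfolding CCIdeal_def D_def by blast
  with f(1,2) show ?thesis by blast
qed

theorem mainTheorem11:
  shows "sigma_complete OPHomeo01 (\<lambda>f x. f x) CCIdeal"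
  unfolding sigma_complete_def
proof (intro allI impI)
  fix a :: "real set" and b :: "nat \<Rightarrow> real set"
  assume "CCIdeal a" "\<forall>n. CCIdeal (b n)"
  then obtain c0 where c0: "c0 \<subseteq> {0..1}" "countable c0" "closed c0" "a \<subseteq> c0"
    unfolding CCIdeal_def by blast
  from \<open>\<forall>n. CCIdeal (b n)\<close> have "\<forall>n. \<exists>k. k \<subseteq> {0..1} \<and> countable k \<and> closed k \<and> b n \<subseteq> k"
    unfolding CCIdeal_def by blast
  then obtain K where K: "\<And>n. K n \<subseteq> {0..1}" "\<And>n. countable (K n)" "\<And>n. closed (K n)"
    and b: "\<And>n. b n \<subseteq> K n"
    by metis
  define C where "C = insert 0 (insert 1 c0)"
  have C: "closed C" "C \<subseteq> {0..1}" "0 \<in> C" "1 \<in> C" "countable C" "a \<subseteq> C"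
    using c0 unfolding C_def by auto
  obtain f where f: "\<And>n. f n \<in> OPHomeo01" "\<And>n x. x \<in> C \<Longrightarrow> f n x = x"
    and squeezed: "CCIdeal (\<Union>n. f n ` K n)"
    using CCIdeal_squeezed_union[OF C(1-5), of K] K by blast
  have "f n \<in> pstab OPHomeo01 (\<lambda>f x. f x) a" for n
    using f C(6) unfolding pstab_def by blast
  moreover have "CCIdeal (\<Union>n. f n ` b n)"
    by (rule CCIdeal_subset[OF squeezed]) (use b in blast)
  ultimately show "\<exists>g. (\<forall>n. g n \<in> pstab OPHomeo01 (\<lambda>f x. f x) a) \<and> CCIdeal (\<Union>n. g n ` b n)"
    by blast
qed

end
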